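(* The functions $g_k(z)=\sum_{j=0}^{\infty}\frac{1}{(j+1)^k}z^j$, $k\in\mathbb{N}$ ($k\geq1$), span a dense subspace of $H^2$.
   Context: $H^2$ denotes the Hardy space of analytic functions $f(z)=\sum_{j\ge0}\hat f(j)z^j$ on the open unit disk with $\|f\|^2=\sum_{j}|\hat f(j)|^2<\infty$. *)

theory Defs
  imports "HOL-Analysis.Analysis"
begin

definition hardy_coeff :: "(complex \<Rightarrow> complex) \<Rightarrow> nat \<Rightarrow> complex" where
  "hardy_coeff f j = (deriv ^^ j) f 0 / of_nat (fact j)"

definition H2 :: "(complex \<Rightarrow> complex) set" where
  "H2 = {f. f holomorphic_on ball 0 1 \<and> summable (\<lambda>j. (norm (hardy_coeff f j))\<^sup>2)}"

definition H2_norm :: "(complex \<Rightarrow> complex) \<Rightarrow> real" where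
  "H2_norm f = sqrt (\<Sum>j. (norm (hardy_coeff f j))\<^sup>2)"

definition gfun :: "nat \<Rightarrow> complex \<Rightarrow> complex" where
  "gfun k z = (\<Sum>j. z ^ j / (of_nat (j + 1)) ^ k)"

end

theory Submission
  imports Defs "HOL-Complex_Analysis.Cauchy_Integral_Formula"
begin

text \<open>
  Taking Taylor coefficients is an isometry of \<open>H\<^sup>2\<close> into \<open>\<ell>\<^sup>2\<close> sending \<open>g\<^sub>k\<close> to the
  sequence \<open>(1/(j+1)\<^sup>k)\<^sub>j\<close>. Since every \<open>\<ell>\<^sup>2\<close> sequence is the limit of its truncations, it
  suffices that each unit vector \<open>e\<^sub>m\<close> lies in the closure of the span of these sequences.
  This holds by strong induction on \<open>m\<close>: removing from \<open>(m+1)\<^sup>k g\<^sub>k\<close> its first \<open>m\<close>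
  coefficients, which lie in the closure by induction, leaves the sequence that is \<open>1\<close> at
  \<open>m\<close> and \<open>((m+1)/(j+1))\<^sup>k\<close> for \<open>j > m\<close>; as \<open>k \<rightarrow> \<infinity>\<close> it tends to \<open>e\<^sub>m\<close> in \<open>\<ell>\<^sup>2\<close> by
  dominated convergence, with dominating sequence \<open>((m+1)/(j+1))\<^sup>2\<close>.
\<close>

section \<open>Taylor coefficients of the functions \<open>g\<^sub>k\<close>\<close>

definition gfun_coeff :: "nat \<Rightarrow> nat \<Rightarrow> complex" where
  "gfun_coeff k j = 1 / of_nat (j + 1) ^ k"

definition gfun_fps :: "nat \<Rightarrow> complex fps" where
  "gfun_fps k = Abs_fps (gfun_coeff k)"

lemma gfun_coeff_of_real: "gfun_coeff k j = of_real (1 / (real j + 1) ^ k)"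
  by (simp add: gfun_coeff_def add.commute)

lemma norm_gfun_coeff: "norm (gfun_coeff k j) = 1 / (real j + 1) ^ k"
  by (simp only: gfun_coeff_of_real norm_of_real) simp

lemma norm_gfun_coeff_le_1: "norm (gfun_coeff k j) \<le> 1"
  by (simp add: norm_gfun_coeff one_le_power)

lemma fps_conv_radius_gfun_fps: "fps_conv_radius (gfun_fps k) \<ge> 1"
  unfolding fps_conv_radius_def gfun_fps_def fps_nth_Abs_fps
proof (rule conv_radius_geI_ex')
  fix r :: real assume r: "0 < r" "ereal r < 1"
  show "summable (\<lambda>j. gfun_coeff k j * of_real r ^ j)"
  proof (rule summable_comparison_test'[OF summable_geometric[of r]])
    show "norm (gfun_coeff k j * of_real r ^ j) \<le> r ^ j" for j
      using r norm_gfun_coeff_le_1[of k j]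
      by (simp add: norm_mult norm_power mult_left_le_one_le)
  qed (use r in auto)
qed

lemma ball_subset_eball_gfun_fps: "ball (0::complex) 1 \<subseteq> eball 0 (fps_conv_radius (gfun_fps k))"
proof
  fix z :: complex assume "z \<in> ball 0 1"
  then have "ereal (norm z) < 1" by simp
  then have "ereal (norm z) < fps_conv_radius (gfun_fps k)"
    using fps_conv_radius_gfun_fps by (rule order.strict_trans2)
  then show "z \<in> eball 0 (fps_conv_radius (gfun_fps k))" by simp
qed

lemma gfun_eq_eval_fps: "gfun k = eval_fps (gfun_fps k)"
  by (simp add: fun_eq_iff gfun_def eval_fps_def gfun_fps_def gfun_coeff_def)

lemma has_fps_expansion_gfun: "gfun k has_fps_expansion gfun_fps k"
  unfolding gfun_eq_eval_fps
  by (rule eval_fps_has_fps_expansion)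
     (rule less_le_trans[OF _ fps_conv_radius_gfun_fps], simp)

lemma holomorphic_gfun: "gfun k holomorphic_on ball 0 1"
  unfolding gfun_eq_eval_fps
  by (rule holomorphic_on_subset[OF holomorphic_on_eval_fps ball_subset_eball_gfun_fps[of k]]) simp

lemma hardy_coeff_eq_fps_nth: "f has_fps_expansion F \<Longrightarrow> hardy_coeff f j = fps_nth F j"
  by (simp add: hardy_coeff_def fps_nth_fps_expansion)

lemma hardy_coeff_gfun: "hardy_coeff (gfun k) j = gfun_coeff k j"
  by (simp add: hardy_coeff_eq_fps_nth[OF has_fps_expansion_gfun] gfun_fps_def)

lemma hardy_coeff_diff_gfun_sum:
  assumes "f holomorphic_on ball 0 1"
  shows "hardy_coeff (\<lambda>z. f z - (\<Sum>k\<in>S. c k * gfun k z)) j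
           = hardy_coeff f j - (\<Sum>k\<in>S. c k * gfun_coeff k j)"
proof -
  have "f has_fps_expansion fps_expansion f 0"
    using assms by (intro has_fps_expansion_fps_expansion[of "ball 0 1"]) auto
  moreover have "(\<lambda>z. \<Sum>k\<in>S. c k * gfun k z) has_fps_expansion (\<Sum>k\<in>S. fps_const (c k) * gfun_fps k)"
    by (intro has_fps_expansion_sum has_fps_expansion_cmult_left has_fps_expansion_gfun)
  ultimately have "hardy_coeff (\<lambda>z. f z - (\<Sum>k\<in>S. c k * gfun k z)) j
      = fps_nth (fps_expansion f 0 - (\<Sum>k\<in>S. fps_const (c k) * gfun_fps k)) j"
    by (intro hardy_coeff_eq_fps_nth has_fps_expansion_diff)
  also have "\<dots> = hardy_coeff f j - (\<Sum>k\<in>S. c k * gfun_coeff k j)"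
    by (simp add: fps_sum_nth gfun_fps_def hardy_coeff_def fps_expansion_def)
  finally show ?thesis .
qed

section \<open>Square-summable sequences\<close>

definition square_summable :: "(nat \<Rightarrow> 'a::real_normed_vector) \<Rightarrow> bool" where
  "square_summable a \<longleftrightarrow> summable (\<lambda>j. (norm (a j))\<^sup>2)"

definition l2_norm :: "(nat \<Rightarrow> 'a::real_normed_vector) \<Rightarrow> real" where
  "l2_norm a = sqrt (\<Sum>j. (norm (a j))\<^sup>2)"

lemma square_summable_add:
  assumes "square_summable a" "square_summable b"
  shows "square_summable (\<lambda>j. a j + b j)"
  unfolding square_summable_def
proof (rule summable_comparison_test')
  show "summable (\<lambda>j. 2 * (norm (a j))\<^sup>2 + 2 * (norm (b j))\<^sup>2)"
    using assms unfolding square_summable_def by (intro summable_add summable_mult)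
  show "norm ((norm (a j + b j))\<^sup>2) \<le> 2 * (norm (a j))\<^sup>2 + 2 * (norm (b j))\<^sup>2" for j
  proof -
    have "(norm (a j + b j))\<^sup>2 \<le> (norm (a j) + norm (b j))\<^sup>2"
      by (intro power_mono norm_triangle_ineq) simp
    also have "\<dots> \<le> 2 * (norm (a j))\<^sup>2 + 2 * (norm (b j))\<^sup>2"
      using sum_squares_bound[of "norm (a j)" "norm (b j)"] by (simp add: power2_sum)
    finally show ?thesis by simp
  qed
qed

lemma square_summable_cmult:
  fixes a :: "nat \<Rightarrow> 'a::real_normed_div_algebra"
  shows "square_summable a \<Longrightarrow> square_summable (\<lambda>j. c * a j)"
  unfolding square_summable_def by (simp add: norm_mult power_mult_distrib summable_mult)

lemma square_summable_minus: "square_summable a \<Longrightarrow> square_summable (\<lambda>j. - a j)"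
  by (simp add: square_summable_def)

lemma square_summable_diff:
  "square_summable a \<Longrightarrow> square_summable b \<Longrightarrow> square_summable (\<lambda>j. a j - b j)"
  using square_summable_add[of a "\<lambda>j. - b j"] square_summable_minus[of b] by simp

lemma square_summable_sum:
  "(\<And>i. i \<in> A \<Longrightarrow> square_summable (a i)) \<Longrightarrow> square_summable (\<lambda>j. \<Sum>i\<in>A. a i j)"
proof (induction A rule: infinite_finite_induct)
  case (insert i A)
  then show ?case by (simp add: square_summable_add)
qed (simp_all add: square_summable_def)

lemma l2_norm_nonneg: "square_summable a \<Longrightarrow> l2_norm a \<ge> 0"
  unfolding l2_norm_def square_summable_def by (simp add: suminf_nonneg)

lemma L2_set_le_l2_norm: "square_summable a \<Longrightarrow> L2_set (\<lambda>j. norm (a j)) {..<n} \<le> l2_norm a"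
  unfolding l2_norm_def L2_set_def square_summable_def
  by (intro real_sqrt_le_mono sum_le_suminf) auto

lemma l2_norm_triangle_ineq:
  assumes "square_summable a" "square_summable b"
  shows "l2_norm (\<lambda>j. a j + b j) \<le> l2_norm a + l2_norm b"
proof -
  have "(\<Sum>j. (norm (a j + b j))\<^sup>2) \<le> (l2_norm a + l2_norm b)\<^sup>2"
  proof (rule suminf_le_const)
    show "summable (\<lambda>j. (norm (a j + b j))\<^sup>2)"
      using square_summable_add[OF assms] by (simp add: square_summable_def)
    fix n
    have "L2_set (\<lambda>j. norm (a j + b j)) {..<n} \<le> L2_set (\<lambda>j. norm (a j) + norm (b j)) {..<n}"
      by (intro L2_set_mono norm_triangle_ineq) auto
    also have "\<dots> \<le> L2_set (\<lambda>j. norm (a j)) {..<n} + L2_set (\<lambda>j. norm (b j)) {..<n}"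
      by (rule L2_set_triangle_ineq)
    also have "\<dots> \<le> l2_norm a + l2_norm b"
      by (intro add_mono L2_set_le_l2_norm assms)
    finally have "(L2_set (\<lambda>j. norm (a j + b j)) {..<n})\<^sup>2 \<le> (l2_norm a + l2_norm b)\<^sup>2"
      by (intro power_mono L2_set_nonneg)
    then show "(\<Sum>j<n. (norm (a j + b j))\<^sup>2) \<le> (l2_norm a + l2_norm b)\<^sup>2"
      by (simp add: L2_set_def sum_nonneg)
  qed
  then show ?thesis
    unfolding l2_norm_def[of "\<lambda>j. a j + b j"]
    using assms by (intro real_le_lsqrt add_nonneg_nonneg l2_norm_nonneg)
qed

lemma l2_norm_cmult:
  fixes a :: "nat \<Rightarrow> 'a::real_normed_div_algebra"
  assumes "square_summable a"
  shows "l2_norm (\<lambda>j. c * a j) = norm c * l2_norm a"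
proof -
  have "(\<Sum>j. (norm (c * a j))\<^sup>2) = (norm c)\<^sup>2 * (\<Sum>j. (norm (a j))\<^sup>2)"
    using assms unfolding square_summable_def by (simp add: norm_mult power_mult_distrib suminf_mult)
  then show ?thesis by (simp add: l2_norm_def real_sqrt_mult)
qed

lemma l2_norm_tendsto_zeroI:
  "(\<lambda>n. \<Sum>j. (norm (a n j))\<^sup>2) \<longlonglongrightarrow> 0 \<Longrightarrow> (\<lambda>n. l2_norm (a n)) \<longlonglongrightarrow> 0"
  unfolding l2_norm_def by (metis tendsto_real_sqrt real_sqrt_zero)

lemma suminf_tendsto_zero_dominated:
  fixes a :: "'b \<Rightarrow> nat \<Rightarrow> real"
  assumes "\<And>j. ((\<lambda>n. a n j) \<longlongrightarrow> 0) F" "\<And>n j. norm (a n j) \<le> M j" "summable M" "F \<noteq> bot"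
  shows "((\<lambda>n. \<Sum>j. a n j) \<longlongrightarrow> 0) F"
  using tannerys_theorem[of "\<lambda>j n. a n j" "\<lambda>_. 0" F M] assms by (simp add: always_eventually)

section \<open>The closure of the span of the \<open>g\<^sub>k\<close> in \<open>\<ell>\<^sup>2\<close>\<close>

definition gfun_span :: "(nat \<Rightarrow> complex) set" where
  "gfun_span = {(\<lambda>j. \<Sum>k\<in>S. c k * gfun_coeff k j) | S c. finite S \<and> S \<subseteq> {1..}}"

lemma gfun_coeff_in_gfun_span: "k \<ge> 1 \<Longrightarrow> gfun_coeff k \<in> gfun_span"
  unfolding gfun_span_def by (auto intro!: exI[of _ "{k}"] exI[of _ "\<lambda>_. 1"])

lemma zero_in_gfun_span: "(\<lambda>_. 0) \<in> gfun_span"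
  unfolding gfun_span_def by (auto intro!: exI[of _ "{}"])

lemma gfun_span_add:
  assumes "a \<in> gfun_span" "b \<in> gfun_span"
  shows "(\<lambda>j. a j + b j) \<in> gfun_span"
proof -
  obtain S c T d where ST: "finite S" "S \<subseteq> {1..}" "finite T" "T \<subseteq> {1..}"
    and a: "a = (\<lambda>j. \<Sum>k\<in>S. c k * gfun_coeff k j)" and b: "b = (\<lambda>j. \<Sum>k\<in>T. d k * gfun_coeff k j)"
    using assms unfolding gfun_span_def by blast
  define e where "e k = (if k \<in> S then c k else 0) + (if k \<in> T then d k else 0)" for k
  have "(\<Sum>k\<in>S \<union> T. e k * gfun_coeff k j)
      = (\<Sum>k\<in>S \<union> T. if k \<in> S then c k * gfun_coeff k j else 0)
        + (\<Sum>k\<in>S \<union> T. if k \<in> T then d k * gfun_coeff k j else 0)" for j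
    unfolding e_def sum.distrib[symmetric] by (intro sum.cong) (auto simp: distrib_right)
  also have "\<dots> j = a j + b j" for j
    using ST by (simp add: a b sum.If_cases Int_absorb1 Int_absorb2)
  finally show ?thesis
    using ST unfolding gfun_span_def by (auto intro!: exI[of _ "S \<union> T"] exI[of _ e])
qed

lemma gfun_span_cmult: "a \<in> gfun_span \<Longrightarrow> (\<lambda>j. d * a j) \<in> gfun_span"
  unfolding gfun_span_def
  by (auto simp: sum_distrib_left mult.assoc intro!: exI[of _ "\<lambda>k. d * _ k"])

lemma square_summable_gfun_coeff:
  assumes "k \<ge> 1"
  shows "square_summable (gfun_coeff k)"
  unfolding square_summable_def
proof (rule summable_comparison_test')
  have "summable (\<lambda>j. inverse (real j ^ 2))"
    by (rule inverse_power_summable) simp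
  then have "summable (\<lambda>j. inverse (real (Suc j) ^ 2))"
    by (rule summable_Suc_iff[THEN iffD2])
  then show "summable (\<lambda>j. 1 / (real j + 1)\<^sup>2)"
    by (simp add: field_simps add.commute)
  show "norm ((norm (gfun_coeff k j))\<^sup>2) \<le> 1 / (real j + 1)\<^sup>2" for j
  proof -
    have "(real j + 1) ^ 1 \<le> (real j + 1) ^ k"
      using assms by (intro power_increasing) auto
    then have "1 / (real j + 1) ^ k \<le> 1 / (real j + 1)"
      by (simp add: frac_le)
    then have "(1 / (real j + 1) ^ k)\<^sup>2 \<le> (1 / (real j + 1))\<^sup>2"
      by (intro power_mono) auto
    then show ?thesis
      by (simp add: norm_gfun_coeff power_divide)
  qed
qed

lemma square_summable_if_in_gfun_span: "a \<in> gfun_span \<Longrightarrow> square_summable a"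
  unfolding gfun_span_def
  by (auto intro!: square_summable_sum square_summable_cmult square_summable_gfun_coeff)

definition gfun_approximable :: "(nat \<Rightarrow> complex) \<Rightarrow> bool" where
  "gfun_approximable b \<longleftrightarrow>
     square_summable b \<and> (\<forall>\<epsilon>>0. \<exists>a\<in>gfun_span. l2_norm (\<lambda>j. b j - a j) < \<epsilon>)"

lemma gfun_approximable_if_in_gfun_span: "a \<in> gfun_span \<Longrightarrow> gfun_approximable a"
  unfolding gfun_approximable_def l2_norm_def
  by (auto intro: square_summable_if_in_gfun_span bexI[of _ a])

lemma square_summable_if_gfun_approximable: "gfun_approximable a \<Longrightarrow> square_summable a"
  by (simp add: gfun_approximable_def)

lemma gfun_approximableD:
  "gfun_approximable b \<Longrightarrow> \<epsilon> > 0 \<Longrightarrow> \<exists>a\<in>gfun_span. l2_norm (\<lambda>j. b j - a j) < \<epsilon>"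
  by (simp add: gfun_approximable_def)

lemma gfun_approximable_add:
  assumes "gfun_approximable a" "gfun_approximable b"
  shows "gfun_approximable (\<lambda>j. a j + b j)"
  unfolding gfun_approximable_def
proof (intro conjI allI impI)
  show "square_summable (\<lambda>j. a j + b j)"
    using assms by (simp add: gfun_approximable_def square_summable_add)
  fix \<epsilon> :: real assume "\<epsilon> > 0"
  obtain a' where a': "a' \<in> gfun_span" "l2_norm (\<lambda>j. a j - a' j) < \<epsilon> / 2"
    using gfun_approximableD[OF assms(1) half_gt_zero[OF \<open>\<epsilon> > 0\<close>]] by blast
  obtain b' where b': "b' \<in> gfun_span" "l2_norm (\<lambda>j. b j - b' j) < \<epsilon> / 2"
    using gfun_approximableD[OF assms(2) half_gt_zero[OF \<open>\<epsilon> > 0\<close>]] by blast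
  have "l2_norm (\<lambda>j. (a j + b j) - (a' j + b' j))
      = l2_norm (\<lambda>j. (a j - a' j) + (b j - b' j))"
    by (simp add: algebra_simps)
  also have "\<dots> \<le> l2_norm (\<lambda>j. a j - a' j) + l2_norm (\<lambda>j. b j - b' j)"
    using assms a' b'
    by (intro l2_norm_triangle_ineq square_summable_diff)
       (auto intro: square_summable_if_in_gfun_span square_summable_if_gfun_approximable)
  also have "\<dots> < \<epsilon>"
    using a' b' by simp
  finally show "\<exists>c\<in>gfun_span. l2_norm (\<lambda>j. a j + b j - c j) < \<epsilon>"
    using a' b' by (intro bexI[of _ "\<lambda>j. a' j + b' j"] gfun_span_add) auto
qed

lemma gfun_approximable_cmult:
  assumes "gfun_approximable a"
  shows "gfun_approximable (\<lambda>j. d * a j)"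
  unfolding gfun_approximable_def
proof (intro conjI allI impI)
  show "square_summable (\<lambda>j. d * a j)"
    using assms by (simp add: gfun_approximable_def square_summable_cmult)
  fix \<epsilon> :: real assume "\<epsilon> > 0"
  have pos: "norm d + 1 > 0"
    by (simp add: add_nonneg_pos)
  obtain a' where a': "a' \<in> gfun_span" "l2_norm (\<lambda>j. a j - a' j) < \<epsilon> / (norm d + 1)"
    using gfun_approximableD[OF assms divide_pos_pos[OF \<open>\<epsilon> > 0\<close> pos]] by blast
  have summable: "square_summable (\<lambda>j. a j - a' j)"
    using assms a' by (intro square_summable_diff)
      (auto intro: square_summable_if_in_gfun_span square_summable_if_gfun_approximable)
  have "l2_norm (\<lambda>j. d * a j - d * a' j) = norm d * l2_norm (\<lambda>j. a j - a' j)"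
    using l2_norm_cmult[OF summable, of d] by (simp add: right_diff_distrib)
  also have "\<dots> \<le> (norm d + 1) * l2_norm (\<lambda>j. a j - a' j)"
    using l2_norm_nonneg[OF summable] by (intro mult_right_mono) simp_all
  also have "\<dots> < (norm d + 1) * (\<epsilon> / (norm d + 1))"
    using a' pos by (intro mult_strict_left_mono) auto
  also have "\<dots> = \<epsilon>"
    using pos by simp
  finally have "l2_norm (\<lambda>j. d * a j - d * a' j) < \<epsilon>" .
  then show "\<exists>c\<in>gfun_span. l2_norm (\<lambda>j. d * a j - c j) < \<epsilon>"
    by (intro bexI[of _ "\<lambda>j. d * a' j"] gfun_span_cmult a') simp
qed

lemma gfun_approximable_sum:
  "(\<And>i. i \<in> A \<Longrightarrow> gfun_approximable (a i)) \<Longrightarrow> gfun_approximable (\<lambda>j. \<Sum>i\<in>A. a i j)"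
proof (induction A rule: infinite_finite_induct)
  case (insert i A)
  then show ?case by (simp add: gfun_approximable_add)
qed (simp_all add: gfun_approximable_if_in_gfun_span zero_in_gfun_span)

lemma gfun_approximable_limit:
  assumes "square_summable b" "\<And>n. gfun_approximable (a n)"
    and "(\<lambda>n. l2_norm (\<lambda>j. b j - a n j)) \<longlonglongrightarrow> 0"
  shows "gfun_approximable b"
  unfolding gfun_approximable_def
proof (intro conjI allI impI)
  show "square_summable b" by fact
  fix \<epsilon> :: real assume "\<epsilon> > 0"
  then have "eventually (\<lambda>n. l2_norm (\<lambda>j. b j - a n j) < \<epsilon> / 2) sequentially"
    by (intro order_tendstoD(2)[OF assms(3)]) simp
  then obtain n where n: "l2_norm (\<lambda>j. b j - a n j) < \<epsilon> / 2"
    unfolding eventually_sequentially by blast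
  obtain c where c: "c \<in> gfun_span" "l2_norm (\<lambda>j. a n j - c j) < \<epsilon> / 2"
    using gfun_approximableD[OF assms(2)[of n] half_gt_zero[OF \<open>\<epsilon> > 0\<close>]] by blast
  have "l2_norm (\<lambda>j. b j - c j) = l2_norm (\<lambda>j. (b j - a n j) + (a n j - c j))"
    by simp
  also have "\<dots> \<le> l2_norm (\<lambda>j. b j - a n j) + l2_norm (\<lambda>j. a n j - c j)"
    using assms(1,2) c
    by (intro l2_norm_triangle_ineq square_summable_diff)
       (auto intro: square_summable_if_in_gfun_span square_summable_if_gfun_approximable)
  also have "\<dots> < \<epsilon>"
    using n c by simp
  finally show "\<exists>c\<in>gfun_span. l2_norm (\<lambda>j. b j - c j) < \<epsilon>"
    using c by blast
qed

lemma gfun_approximable_diff: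
  "gfun_approximable a \<Longrightarrow> gfun_approximable b \<Longrightarrow> gfun_approximable (\<lambda>j. a j - b j)"
  using gfun_approximable_add[of a "\<lambda>j. (-1) * b j"] gfun_approximable_cmult[of b "-1"] by simp

section \<open>Density\<close>

definition unit_seq :: "nat \<Rightarrow> nat \<Rightarrow> complex" where
  "unit_seq m j = (if j = m then 1 else 0)"

lemma square_summable_unit_seq: "square_summable (unit_seq m)"
  unfolding square_summable_def unit_seq_def by (rule summable_finite[of "{m}"]) auto

lemma sum_unit_seq: "(\<Sum>i<n. b i * unit_seq i j) = (if j < n then b j else 0)"
  by (simp add: unit_seq_def if_distrib cong: if_cong)

lemma gfun_approximable_if_unit_seqs:
  assumes "\<And>m. gfun_approximable (unit_seq m)" "square_summable b"
  shows "gfun_approximable b"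
proof (rule gfun_approximable_limit[OF assms(2)])
  define truncation where "truncation n j = (if j < n then b j else 0)" for n j
  show "gfun_approximable (truncation n)" for n
    using gfun_approximable_sum[of "{..<n}" "\<lambda>i j. b i * unit_seq i j"]
    by (simp add: assms(1) gfun_approximable_cmult sum_unit_seq truncation_def[abs_def])
  have "(\<lambda>n. \<Sum>j. (norm (b j - truncation n j))\<^sup>2) \<longlonglongrightarrow> 0"
  proof (rule suminf_tendsto_zero_dominated)
    show "(\<lambda>n. (norm (b j - truncation n j))\<^sup>2) \<longlonglongrightarrow> 0" for j
      by (intro tendsto_eventually eventually_mono[OF eventually_gt_at_top[of j]])
         (simp add: truncation_def)
    show "norm ((norm (b j - truncation n j))\<^sup>2) \<le> (norm (b j))\<^sup>2" for n j
      by (simp add: truncation_def)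
  qed (use assms(2) in \<open>simp_all add: square_summable_def\<close>)
  then show "(\<lambda>n. l2_norm (\<lambda>j. b j - truncation n j)) \<longlonglongrightarrow> 0"
    by (rule l2_norm_tendsto_zeroI)
qed

definition tail_gfun_coeff :: "nat \<Rightarrow> nat \<Rightarrow> nat \<Rightarrow> complex" where
  "tail_gfun_coeff m K j = (if j < m then 0 else of_nat (m + 1) ^ K * gfun_coeff K j)"

lemma tail_gfun_coeff_of_real:
  "tail_gfun_coeff m K j = (if j < m then 0 else of_real ((real (m + 1) / (real j + 1)) ^ K))"
  by (simp add: tail_gfun_coeff_def gfun_coeff_of_real power_divide)

lemma tail_gfun_coeff_tendsto_unit_seq:
  "(\<lambda>K. l2_norm (\<lambda>j. unit_seq m j - tail_gfun_coeff m (Suc K) j)) \<longlonglongrightarrow> 0"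
proof (rule l2_norm_tendsto_zeroI)
  define r where "r j = real (m + 1) / (real j + 1)" for j
  have r_nonneg: "r j \<ge> 0" and r_less_1: "j > m \<Longrightarrow> r j < 1" for j
    by (auto simp: r_def)
  have diff: "(norm (unit_seq m j - tail_gfun_coeff m K j))\<^sup>2 = (if j \<le> m then 0 else (r j ^ K)\<^sup>2)" for K j
    by (auto simp: tail_gfun_coeff_of_real unit_seq_def r_def norm_minus_commute add.commute
        simp del: of_real_power)
  show "(\<lambda>K. \<Sum>j. (norm (unit_seq m j - tail_gfun_coeff m (Suc K) j))\<^sup>2) \<longlonglongrightarrow> 0"
    unfolding diff
  proof (rule suminf_tendsto_zero_dominated)
    show "(\<lambda>K. if j \<le> m then 0 else (r j ^ Suc K)\<^sup>2) \<longlonglongrightarrow> 0" for j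
    proof (cases "j \<le> m")
      case False
      then have "(\<lambda>K. r j ^ Suc K) \<longlonglongrightarrow> 0"
        using r_nonneg[of j] r_less_1[of j] by (intro LIMSEQ_Suc LIMSEQ_power_zero) simp
      from tendsto_power[OF this, of 2] False show ?thesis by simp
    qed simp
    show "norm (if j \<le> m then 0 else (r j ^ Suc K)\<^sup>2) \<le> (r j)\<^sup>2" for K j
    proof -
      have "r j ^ Suc K \<le> r j" if "j > m"
        using power_decreasing[of 1 "Suc K" "r j"] r_nonneg[of j] r_less_1[OF that] by simp
      then show ?thesis
        using r_nonneg[of j] by (auto intro!: power_mono)
    qed
    have "(r j)\<^sup>2 = (real m + 1)\<^sup>2 * (norm (gfun_coeff 1 j))\<^sup>2" for j
      by (simp add: r_def norm_gfun_coeff power_divide)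
    then show "summable (\<lambda>j. (r j)\<^sup>2)"
      using square_summable_gfun_coeff[of 1] by (simp add: square_summable_def summable_mult)
  qed simp
qed

lemma gfun_approximable_tail_gfun_coeff:
  assumes "\<And>i. i < m \<Longrightarrow> gfun_approximable (unit_seq i)" "K \<ge> 1"
  shows "gfun_approximable (tail_gfun_coeff m K)"
proof -
  have "gfun_approximable (gfun_coeff K)"
    using assms(2) by (intro gfun_approximable_if_in_gfun_span gfun_coeff_in_gfun_span)
  moreover have "gfun_approximable (\<lambda>j. \<Sum>i<m. gfun_coeff K i * unit_seq i j)"
    using assms(1) by (intro gfun_approximable_sum gfun_approximable_cmult) simp
  ultimately have "gfun_approximable
      (\<lambda>j. of_nat (m + 1) ^ K * (gfun_coeff K j - (\<Sum>i<m. gfun_coeff K i * unit_seq i j)))"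
    by (intro gfun_approximable_cmult gfun_approximable_diff)
  also have "(\<lambda>j. of_nat (m + 1) ^ K * (gfun_coeff K j - (\<Sum>i<m. gfun_coeff K i * unit_seq i j)))
      = tail_gfun_coeff m K"
    by (simp add: fun_eq_iff tail_gfun_coeff_def sum_unit_seq)
  finally show ?thesis .
qed

lemma gfun_approximable_unit_seq: "gfun_approximable (unit_seq m)"
proof (induction m rule: less_induct)
  case (less m)
  show ?case
    by (rule gfun_approximable_limit[OF square_summable_unit_seq _ tail_gfun_coeff_tendsto_unit_seq])
       (simp add: gfun_approximable_tail_gfun_coeff less)
qed

lemma gfun_approximable_iff_square_summable: "gfun_approximable b \<longleftrightarrow> square_summable b"
  using gfun_approximable_if_unit_seqs[OF gfun_approximable_unit_seq]
  by (auto simp: gfun_approximable_def)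

theorem mainTheorem11:
  shows "(\<forall>k\<ge>1. gfun k \<in> H2) \<and>
    (\<forall>f\<in>H2. \<forall>\<epsilon>>0. \<exists>S c. finite S \<and> S \<subseteq> {1..} \<and>
        H2_norm (\<lambda>z. f z - (\<Sum>k\<in>S. c k * gfun k z)) < \<epsilon>)"
proof (intro conjI allI impI ballI)
  fix k :: nat
  assume "k \<ge> 1"
  then show "gfun k \<in> H2"
    using square_summable_gfun_coeff[of k] holomorphic_gfun[of k]
    by (simp add: H2_def hardy_coeff_gfun square_summable_def)
next
  fix f and \<epsilon> :: real
  assume "f \<in> H2" "\<epsilon> > 0"
  then have holo: "f holomorphic_on ball 0 1" and "gfun_approximable (hardy_coeff f)"
    by (simp_all add: H2_def gfun_approximable_iff_square_summable square_summable_def)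
  then obtain a where "a \<in> gfun_span" and approx: "l2_norm (\<lambda>j. hardy_coeff f j - a j) < \<epsilon>"
    using gfun_approximableD \<open>\<epsilon> > 0\<close> by blast
  then obtain S c where S: "finite S" "S \<subseteq> {1..}" and a: "a = (\<lambda>j. \<Sum>k\<in>S. c k * gfun_coeff k j)"
    unfolding gfun_span_def by blast
  have "H2_norm (\<lambda>z. f z - (\<Sum>k\<in>S. c k * gfun k z)) = l2_norm (\<lambda>j. hardy_coeff f j - a j)"
    by (simp add: a H2_norm_def l2_norm_def hardy_coeff_diff_gfun_sum[OF holo])
  with S approx show "\<exists>S c. finite S \<and> S \<subseteq> {1..} \<and>
      H2_norm (\<lambda>z. f z - (\<Sum>k\<in>S. c k * gfun k z)) < \<epsilon>"
    by (metis (no_types, lifting))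
qed

end
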